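(* For transformation graphs $G_1,G_2$ such that $G_1$, $G_2$ and $G_1\odot G_2$ have no cycle of negative weight, $G_1\cdot G_2=|G_1|\cdot|G_2|$. In particular, the operation $\cdot$ is associative (on graphs for which all the involved compositions have no negative cycles).
   Context: Fix a finite set of clocks $X=\{x_0,\dots,x_m\}$. A weight is a pair $(\preccurlyeq,d)$ with $\preccurlyeq\in\{<,\le\}$, $d\in\mathbb{Z}$; weights are added by $(\preccurlyeq_1,d_1)+(\preccurlyeq_2,d_2)=(\preccurlyeq,d_1+d_2)$, $\preccurlyeq$ being $<$ iff one of $\preccurlyeq_1,\preccurlyeq_2$ is $<$, and totally ordered by $(\preccurlyeq,d)<(\preccurlyeq',d')$ iff $d<d'$, or $d=d'$, $\preccurlyeq$ is $<$ and $\preccurlyeq'$ is $\le$. A weight is negative if it is smaller than $(\le,0)$; the weight of a path is the sum of its edge weights. A transformation graph with $k+1$ columns is a directed graph with vertex set $\{0,\dots,k\}\times X$ whose edges carry weights; vertex $(j,x)$ lies in column $j$. Composition: if $G_1$ has $k_1$ columns and $G_2$ has $k_2$ columns, $G_1\odot G_2$ is the transformation graph with vertex set $\{0,\dots,k_1+k_2-1\}\times X$ whose edges are: the edges of $G_1$; the edges of $G_2$ shifted by $k_1$ columns; and, for every $x\in X$, edges $(k_1-1,x)\to(k_1,x)$ and $(k_1,x)\to(k_1-1,x)$ of weight $(\le,0)$. The canonical form of a transformation graph $G$ without negative cycles is the graph on the same vertices having, for every pair of distinct vertices $u,w$ such that $G$ has a path from $u$ to $w$, an edge $u\to w$ whose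 weight is the minimal weight of a path from $u$ to $w$ in $G$. The short transformation graph $|G|$ of a graph $G$ with $k+1$ columns and no negative cycle is obtained by putting $G$ in canonical form and restricting it to columns $0$ and $k$, renumbered as columns $0$ and $1$. Define $G_1\cdot G_2=|G_1\odot G_2|$. *)

theory Defs
  imports Main
begin

datatype strictness = Lt | Le

type_synonym weight = "strictness \<times> int"

fun wadd :: "weight \<Rightarrow> weight \<Rightarrow> weight" where
  "wadd (s1, d1) (s2, d2) = ((if s1 = Lt \<or> s2 = Lt then Lt else Le), d1 + d2)"

fun wless :: "weight \<Rightarrow> weight \<Rightarrow> bool" where
  "wless (s, d) (s', d') = (d < d' \<or> (d = d' \<and> s = Lt \<and> s' = Le))"

definition wle :: "weight \<Rightarrow> weight \<Rightarrow> bool" where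
  "wle a b \<longleftrightarrow> wless a b \<or> a = b"

definition wneg :: "weight \<Rightarrow> bool" where
  "wneg w \<longleftrightarrow> wless w (Le, 0)"

text \<open>A vertex is a pair (column, clock); clocks form a finite type 'c.
  A transformation graph is a pair (number of columns, edge function);
  the edge function gives the weight of the edge u \<rightarrow> w, or None if absent.\<close>

type_synonym 'c vertex = "nat \<times> 'c"
type_synonym 'c edges = "'c vertex \<Rightarrow> 'c vertex \<Rightarrow> weight option"
type_synonym 'c tgraph = "nat \<times> 'c edges"

definition ncols :: "'c tgraph \<Rightarrow> nat" where
  "ncols G = fst G"

definition edg :: "'c tgraph \<Rightarrow> 'c edges" where
  "edg G = snd G"

text \<open>Well-formed transformation graph with k+1 columns, k \<ge> 1: all edges
  lie between vertices in columns 0..k.\<close>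
definition tgraph :: "('c::finite) tgraph \<Rightarrow> bool" where
  "tgraph G \<longleftrightarrow> 2 \<le> ncols G \<and>
     (\<forall>u v. edg G u v \<noteq> None \<longrightarrow> fst u < ncols G \<and> fst v < ncols G)"

fun pw :: "'c edges \<Rightarrow> 'c vertex list \<Rightarrow> weight option" where
  "pw E [] = None"
| "pw E [v] = Some (Le, 0)"
| "pw E (u # v # rest) =
     (case E u v of None \<Rightarrow> None | Some a \<Rightarrow> map_option (wadd a) (pw E (v # rest)))"

definition is_path :: "'c tgraph \<Rightarrow> 'c vertex \<Rightarrow> 'c vertex \<Rightarrow> weight \<Rightarrow> bool" where
  "is_path G u w d \<longleftrightarrow> (\<exists>vs. 2 \<le> length vs \<and> hd vs = u \<and> last vs = w \<and> pw (edg G) vs = Some d)"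

definition no_neg_cycle :: "'c tgraph \<Rightarrow> bool" where
  "no_neg_cycle G \<longleftrightarrow> (\<forall>u d. is_path G u u d \<longrightarrow> \<not> wneg d)"

definition min_path_weight :: "'c tgraph \<Rightarrow> 'c vertex \<Rightarrow> 'c vertex \<Rightarrow> weight" where
  "min_path_weight G u w = (THE d. is_path G u w d \<and> (\<forall>d'. is_path G u w d' \<longrightarrow> wle d d'))"

definition canon :: "'c tgraph \<Rightarrow> 'c tgraph" where
  "canon G = (ncols G, \<lambda>u w. if u \<noteq> w \<and> (\<exists>d. is_path G u w d)
                              then Some (min_path_weight G u w) else None)"

text \<open>Short transformation graph: canonical form restricted to columns 0 and k,
  renumbered 0 and 1.\<close>
definition short :: "'c tgraph \<Rightarrow> 'c tgraph" where
  "short G = (2, \<lambda>u w.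
     (let r = (\<lambda>(j, x). (if j = 0 then 0 else ncols G - 1, x)) in
      if fst u \<le> 1 \<and> fst w \<le> 1 then edg (canon G) (r u) (r w) else None))"

definition comp :: "'c tgraph \<Rightarrow> 'c tgraph \<Rightarrow> 'c tgraph" (infixl "\<odot>" 70) where
  "comp G1 G2 = (let k1 = ncols G1 in (k1 + ncols G2, \<lambda>u v.
     if fst u < k1 \<and> fst v < k1 then edg G1 u v
     else if k1 \<le> fst u \<and> k1 \<le> fst v then edg G2 (fst u - k1, snd u) (fst v - k1, snd v)
     else if snd u = snd v \<and> ((fst u = k1 - 1 \<and> fst v = k1) \<or> (fst u = k1 \<and> fst v = k1 - 1))
       then Some (Le, 0) else None))"

definition dot :: "'c tgraph \<Rightarrow> 'c tgraph \<Rightarrow> 'c tgraph" (infixl "\<cdot>" 70) where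
  "dot G1 G2 = short (G1 \<odot> G2)"

end

theory Submission
  imports Defs
begin

text \<open>
  With no negative cycles, least path weights exist: cutting cycles out of a walk does not
  increase its weight, and only finitely many walks without repeated vertices remain.

  The heart of the matter is that in \<open>A \<odot> B\<close> the first factor may be replaced by \<open>|A|\<close>
  without changing least path weights between the surviving vertices: a path is cut at its visits
  to columns \<open>0\<close> and \<open>k\<close> of \<open>A\<close>, the pieces running inside \<open>A\<close> are dominated by edges of \<open>|A|\<close>,
  and conversely every edge of \<open>|A|\<close> is realised by a path in \<open>A\<close>. Hence
  \<open>|A \<odot> B| = ||A| \<odot> B|\<close>, and reversing the order of the columns gives
  \<open>|A \<odot> B| = |A \<odot> |B||\<close>. The first claim applies both; associativity follows from them
  together with the associativity of \<open>\<odot>\<close>.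
\<close>

lemma strictness_neq [simp]: "s \<noteq> Lt \<longleftrightarrow> s = Le" "s \<noteq> Le \<longleftrightarrow> s = Lt"
  by (cases s; simp)+

text \<open>Weights embed order-preservingly into the integers: \<open>(\<le>, d)\<close> goes to \<open>2d\<close>, \<open>(<, d)\<close> to \<open>2d - 1\<close>.\<close>

definition wkey :: "weight \<Rightarrow> int" where
  "wkey w = 2 * snd w - (if fst w = Lt then 1 else 0)"

lemma wle_iff_wkey: "wle a b \<longleftrightarrow> wkey a \<le> wkey b"
  by (cases a; cases b) (auto simp: wle_def wkey_def split: strictness.splits)

lemma wle_refl [simp]: "wle a a"
  by (simp add: wle_def)

lemma wle_trans: "wle a b \<Longrightarrow> wle b c \<Longrightarrow> wle a c"
  by (simp add: wle_iff_wkey)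

lemma wle_antisym: "wle a b \<Longrightarrow> wle b a \<Longrightarrow> a = b"
  by (cases a; cases b) (auto simp: wle_def)

lemma wadd_assoc: "wadd (wadd a b) c = wadd a (wadd b c)"
  by (cases a; cases b; cases c) auto

lemma wadd_zero_right [simp]: "wadd a (Le, 0) = a"
  by (cases a) auto

lemma wadd_zero_left [simp]: "wadd (Le, 0) a = a"
  by (cases a) auto

lemma wadd_mono: "wle a b \<Longrightarrow> wle c d \<Longrightarrow> wle (wadd a c) (wadd b d)"
  by (cases a; cases b; cases c; cases d) (auto simp: wle_def)

lemma not_wneg: "\<not> wneg d \<longleftrightarrow> wle (Le, 0) d"
  by (cases d) (auto simp: wneg_def wle_def)

definition least_weight :: "weight set \<Rightarrow> weight \<Rightarrow> bool" where
  "least_weight W m \<longleftrightarrow> m \<in> W \<and> (\<forall>d\<in>W. wle m d)"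

lemma least_weight_unique: "least_weight W m \<Longrightarrow> least_weight W m' \<Longrightarrow> m = m'"
  unfolding least_weight_def using wle_antisym by blast

lemma least_weight_exists: "finite W \<Longrightarrow> W \<noteq> {} \<Longrightarrow> \<exists>m. least_weight W m"
  using ex_is_arg_min_if_finite[of W wkey]
  unfolding least_weight_def is_arg_min_linorder wle_iff_wkey by blast

lemma least_weight_coinitial:
  assumes "least_weight V m"
    and "\<And>d. d \<in> V \<Longrightarrow> \<exists>d'\<in>W. wle d' d" and "\<And>d. d \<in> W \<Longrightarrow> \<exists>d'\<in>V. wle d' d"
  shows "least_weight W m"
proof -
  have below: "wle m d" if "d \<in> W" for d
    using assms that unfolding least_weight_def by (meson wle_trans)
  obtain d' where "d' \<in> W" "wle d' m"
    using assms unfolding least_weight_def by blast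
  with below have "d' = m" by (blast intro: wle_antisym)
  with \<open>d' \<in> W\<close> below show ?thesis
    unfolding least_weight_def by blast
qed

declare wadd.simps [simp del]

lemma pw_Cons_Cons:
  "pw E (u # v # vs) = Some d \<longleftrightarrow> (\<exists>e d'. E u v = Some e \<and> pw E (v # vs) = Some d' \<and> d = wadd e d')"
  by (auto split: option.splits)

lemma pw_append:
  "pw E vs = Some a \<Longrightarrow> pw E ws = Some b \<Longrightarrow> last vs = hd ws \<Longrightarrow> pw E (vs @ tl ws) = Some (wadd a b)"
proof (induction E vs arbitrary: a rule: pw.induct)
  case (2 E v)
  then show ?case by (cases ws) auto
next
  case (3 E u v rest)
  then obtain e a' where "E u v = Some e" "pw E (v # rest) = Some a'" "a = wadd e a'"
    unfolding pw_Cons_Cons by blast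
  with 3 show ?case
    by (simp only: append_Cons pw_Cons_Cons) (auto simp: wadd_assoc)
qed simp

lemma pw_split:
  "pw E (xs @ y # zs) = Some d \<Longrightarrow>
     \<exists>a b. pw E (xs @ [y]) = Some a \<and> pw E (y # zs) = Some b \<and> d = wadd a b"
proof (induction xs arbitrary: d)
  case (Cons x xs)
  then show ?case
    by (cases xs) (auto split: option.splits simp: wadd_assoc simp del: split_paired_Ex)
qed simp

definition walk :: "'c edges \<Rightarrow> 'c vertex \<Rightarrow> 'c vertex \<Rightarrow> weight \<Rightarrow> bool" where
  "walk E u w d \<longleftrightarrow> (\<exists>vs. hd vs = u \<and> last vs = w \<and> pw E vs = Some d)"

lemma walk_refl: "walk E u u (Le, 0)"
  unfolding walk_def by (rule exI[of _ "[u]"]) simp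

lemma walk_edge: "E u v = Some e \<Longrightarrow> walk E u v e"
  unfolding walk_def by (rule exI[of _ "[u, v]"]) simp

lemma walk_trans: "walk E u v a \<Longrightarrow> walk E v w b \<Longrightarrow> walk E u w (wadd a b)"
  unfolding walk_def
proof (elim exE conjE)
  fix vs ws
  assume vs: "hd vs = u" "last vs = v" "pw E vs = Some a" and ws: "hd ws = v" "last ws = w" "pw E ws = Some b"
  have "vs \<noteq> []" "ws \<noteq> []" using vs(3) ws(3) by auto
  then have "hd (vs @ tl ws) = u" "last (vs @ tl ws) = w"
    using vs ws by (cases ws; auto simp: last_append)+
  moreover have "pw E (vs @ tl ws) = Some (wadd a b)"
    using pw_append[OF vs(3) ws(3)] vs ws by simp
  ultimately show "\<exists>zs. hd zs = u \<and> last zs = w \<and> pw E zs = Some (wadd a b)" by blast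
qed

lemma is_path_imp_walk: "is_path G u w d \<Longrightarrow> walk (edg G) u w d"
  unfolding is_path_def walk_def by blast

lemma walk_imp_is_path:
  assumes "walk (edg G) u w d" shows "is_path G u w d \<or> (u = w \<and> d = (Le, 0))"
proof -
  obtain vs where vs: "hd vs = u" "last vs = w" "pw (edg G) vs = Some d"
    using assms unfolding walk_def by blast
  show ?thesis
  proof (cases "2 \<le> length vs")
    case True
    with vs show ?thesis unfolding is_path_def by blast
  next
    case False
    with vs have "vs = [u]"
      by (cases "(edg G, vs)" rule: pw.cases) auto
    with vs show ?thesis by simp
  qed
qed

lemma is_path_iff_walk: "u \<noteq> w \<Longrightarrow> is_path G u w d \<longleftrightarrow> walk (edg G) u w d"
  using is_path_imp_walk walk_imp_is_path by blast

definition walk_le :: "'c edges \<Rightarrow> 'c vertex \<Rightarrow> 'c vertex \<Rightarrow> weight \<Rightarrow> bool" where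
  "walk_le E u w d \<longleftrightarrow> (\<exists>d'. walk E u w d' \<and> wle d' d)"

lemma walk_le_refl: "wle (Le, 0) d \<Longrightarrow> walk_le E u u d"
  unfolding walk_le_def using walk_refl by blast

lemma walk_le_edge: "E u v = Some e \<Longrightarrow> walk_le E u v e"
  unfolding walk_le_def using walk_edge wle_refl by blast

lemma walk_le_mono: "walk_le E u w a \<Longrightarrow> wle a b \<Longrightarrow> walk_le E u w b"
  unfolding walk_le_def using wle_trans by blast

lemma walk_le_trans: "walk_le E u v a \<Longrightarrow> walk_le E v w b \<Longrightarrow> walk_le E u w (wadd a b)"
  unfolding walk_le_def using walk_trans wadd_mono by blast

lemma walk_lift:
  assumes edge: "\<And>u v e. E' u v = Some e \<Longrightarrow> walk_le E (f u) (f v) e"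
    and "walk E' u w d"
  shows "walk_le E (f u) (f w) d"
proof -
  have "walk_le E (f (hd vs)) (f (last vs)) d" if "pw E' vs = Some d" for vs d
    using that
  proof (induction vs arbitrary: d rule: induct_list012)
    case (2 v)
    then show ?case by (simp add: walk_le_refl)
  next
    case (3 u v rest)
    then obtain e d' where "E' u v = Some e" "pw E' (v # rest) = Some d'" "d = wadd e d'"
      unfolding pw_Cons_Cons by blast
    with 3 show ?case
      using walk_le_trans[OF edge] by (metis last_ConsR list.distinct(1) list.sel(1))
  qed simp
  with assms(2) show ?thesis
    unfolding walk_def by blast
qed

subsection \<open>Least walk weights\<close>

definition nonneg_cycles :: "'c edges \<Rightarrow> bool" where
  "nonneg_cycles E \<longleftrightarrow> (\<forall>u d. walk E u u d \<longrightarrow> wle (Le, 0) d)"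

lemma no_neg_cycle_iff: "no_neg_cycle G \<longleftrightarrow> nonneg_cycles (edg G)"
  unfolding no_neg_cycle_def nonneg_cycles_def not_wneg
  by (metis is_path_imp_walk walk_imp_is_path wle_refl)

lemma pw_remove_cycle:
  assumes "nonneg_cycles E" and "pw E (xs @ y # ys @ y # zs) = Some d"
  shows "\<exists>d'. pw E (xs @ y # zs) = Some d' \<and> wle d' d"
proof -
  obtain a b0 where a: "pw E (xs @ [y]) = Some a" and b0: "pw E (y # ys @ y # zs) = Some b0"
    and "d = wadd a b0"
    using pw_split[OF assms(2)] by blast
  moreover obtain c b where c: "pw E ((y # ys) @ [y]) = Some c" and b: "pw E (y # zs) = Some b"
    and "b0 = wadd c b"
    using pw_split[of E "y # ys" y zs b0] b0 by auto
  moreover have "walk E y y c"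
    unfolding walk_def by (rule exI[of _ "(y # ys) @ [y]"]) (use c in simp)
  then have "wle (wadd (Le, 0) b) (wadd c b)"
    using assms(1) wadd_mono[OF _ wle_refl] unfolding nonneg_cycles_def by blast
  ultimately have "wle (wadd a b) d"
    using wadd_mono[OF wle_refl] by simp
  moreover have "pw E (xs @ y # zs) = Some (wadd a b)"
    using pw_append[OF a b] by simp
  ultimately show ?thesis by blast
qed

lemma pw_distinct:
  assumes "nonneg_cycles E"
  shows "pw E vs = Some d \<Longrightarrow> \<exists>ws d'. distinct ws \<and> set ws \<subseteq> set vs \<and> hd ws = hd vs \<and>
           last ws = last vs \<and> pw E ws = Some d' \<and> wle d' d"
proof (induction "length vs" arbitrary: vs d rule: less_induct)
  case less
  show ?case
  proof (cases "distinct vs")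
    case False
    then obtain xs y ys zs where vs: "vs = xs @ y # ys @ y # zs"
      using not_distinct_decomp by fastforce
    then obtain d' where d': "pw E (xs @ y # zs) = Some d'" "wle d' d"
      using pw_remove_cycle[OF assms] less.prems by blast
    have "hd (xs @ y # zs) = hd vs" "last (xs @ y # zs) = last vs" "set (xs @ y # zs) \<subseteq> set vs"
      using vs by (cases xs; auto)+
    moreover obtain ws d'' where "distinct ws" "set ws \<subseteq> set (xs @ y # zs)"
      "hd ws = hd (xs @ y # zs)" "last ws = last (xs @ y # zs)" "pw E ws = Some d''" "wle d'' d'"
      using less.hyps[OF _ d'(1)] vs by auto
    ultimately show ?thesis
      using wle_trans[OF _ d'(2), of d''] by (intro exI[of _ ws] exI[of _ d'']) auto
  next
    case True
    with less.prems show ?thesis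
      by (intro exI[of _ vs] exI[of _ d]) simp
  qed
qed

lemma pw_set_subset:
  assumes "\<And>u v. E u v \<noteq> None \<Longrightarrow> u \<in> V \<and> v \<in> V"
  shows "pw E vs \<noteq> None \<Longrightarrow> set vs \<subseteq> insert (hd vs) V"
proof (induction vs rule: induct_list012)
  case (3 x y zs)
  then have "E x y \<noteq> None" "pw E (y # zs) \<noteq> None"
    by (auto split: option.splits)
  then have "y \<in> V" "set (y # zs) \<subseteq> insert y V"
    using assms 3(2) by auto
  then show ?case by auto
qed auto

lemma least_walk_weight_exists:
  assumes V: "finite V" "\<And>u v. E u v \<noteq> None \<Longrightarrow> u \<in> V \<and> v \<in> V"
    and "nonneg_cycles E" and "walk E u w d"
  shows "\<exists>m. least_weight {d. walk E u w d} m"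
proof -
  define L where "L = {ws. set ws \<subseteq> insert u V \<and> distinct ws}"
  define D where "D = {d. \<exists>ws\<in>L. hd ws = u \<and> last ws = w \<and> pw E ws = Some d}"
  have dominated: "\<exists>d'\<in>D. wle d' d" if walk: "walk E u w d" for d
  proof -
    obtain vs where vs: "hd vs = u" "last vs = w" "pw E vs = Some d"
      using walk unfolding walk_def by blast
    have "set vs \<subseteq> insert u V"
      using pw_set_subset[OF V(2), where vs=vs] vs by simp
    moreover obtain ws d' where "distinct ws" "set ws \<subseteq> set vs" "hd ws = u" "last ws = w"
      "pw E ws = Some d'" "wle d' d"
      using pw_distinct[OF assms(3) vs(3)] unfolding vs(1,2) by blast
    ultimately show ?thesis
      unfolding D_def L_def by blast
  qed
  have "finite L"
    unfolding L_def using V(1) by (simp add: finite_subset_distinct)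
  moreover have "D \<subseteq> (\<lambda>ws. the (pw E ws)) ` L"
    unfolding D_def by force
  ultimately have "finite D"
    by (meson finite_imageI finite_subset)
  moreover have "D \<noteq> {}"
    using dominated assms(4) by blast
  ultimately obtain m where m: "least_weight D m"
    using least_weight_exists by blast
  have "D \<subseteq> {d. walk E u w d}"
    unfolding D_def walk_def by blast
  then have "least_weight {d. walk E u w d} m"
    using dominated wle_refl by (intro least_weight_coinitial[OF m]) blast+
  then show ?thesis ..
qed

subsection \<open>Contracting a subgraph\<close>

definition restr :: "'c edges \<Rightarrow> 'c vertex set \<Rightarrow> 'c edges" where
  "restr E S u v = (if u \<in> S \<and> v \<in> S then E u v else None)"

lemma pw_restr: "set vs \<subseteq> S \<Longrightarrow> pw (restr E S) vs = pw E vs"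
  by (induction vs rule: induct_list012) (auto simp: restr_def split: option.splits)

lemma pw_edge: "pw E vs \<noteq> None \<Longrightarrow> Suc i < length vs \<Longrightarrow> E (vs ! i) (vs ! Suc i) \<noteq> None"
proof (induction vs arbitrary: i rule: induct_list012)
  case (3 x y zs)
  then show ?case by (cases i) (auto split: option.splits)
qed auto

text \<open>\<open>E'\<close> arises from \<open>E\<close> by replacing the subgraph induced by \<open>S\<close> with the distances between
  those of its vertices that lie in the image of the relabelling \<open>\<phi>\<close>; all other edges are kept.\<close>

locale contraction =
  fixes E E' :: "'c edges" and S :: "'c vertex set" and \<phi> :: "'c vertex \<Rightarrow> 'c vertex"
  assumes inj_phi: "inj \<phi>"
    and boundary: "\<And>u v. E u v \<noteq> None \<Longrightarrow> \<not> (u \<in> S \<and> v \<in> S) \<Longrightarrow> u \<in> range \<phi> \<and> v \<in> range \<phi>"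
    and edge_outside: "\<And>p q. \<not> (\<phi> p \<in> S \<and> \<phi> q \<in> S) \<Longrightarrow> E' p q = E (\<phi> p) (\<phi> q)"
    and edge_inside: "\<And>p q d. \<phi> p \<in> S \<Longrightarrow> \<phi> q \<in> S \<Longrightarrow> p \<noteq> q \<Longrightarrow>
           walk (restr E S) (\<phi> p) (\<phi> q) d \<Longrightarrow> \<exists>e. E' p q = Some e \<and> wle e d"
    and edge_realised: "\<And>p q e. E' p q = Some e \<Longrightarrow> walk_le E (\<phi> p) (\<phi> q) e"
    and nonneg_cycles_inside: "nonneg_cycles (restr E S)"
begin

lemma crossing_walk_length:
  assumes "pw E vs \<noteq> None" and "\<not> set vs \<subseteq> S"
    and interior: "\<And>i. 0 < i \<Longrightarrow> i < length vs - 1 \<Longrightarrow> vs ! i \<notin> range \<phi>"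
  shows "length vs \<le> 2"
proof (rule ccontr)
  assume long: "\<not> length vs \<le> 2"
  obtain k where k: "k < length vs" "vs ! k \<notin> S"
    using assms(2) by (metis in_set_conv_nth subsetI)
  define i where "i = min k (length vs - 2)"
  have "Suc i < length vs" "k = i \<or> k = Suc i"
    using k long unfolding i_def by auto
  then have "vs ! i \<in> range \<phi>" "vs ! Suc i \<in> range \<phi>"
    using boundary[OF pw_edge[OF assms(1)]] k(2) by blast+
  moreover have "0 < i \<and> i < length vs - 1 \<or> 0 < Suc i \<and> Suc i < length vs - 1"
    using \<open>Suc i < length vs\<close> long by auto
  ultimately show False
    using interior by blast
qed

lemma walk_le_inside:
  assumes "set vs \<subseteq> S" "pw E vs = Some d" "hd vs = \<phi> p" "last vs = \<phi> q"
  shows "walk_le E' p q d"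
proof -
  have walk: "walk (restr E S) (\<phi> p) (\<phi> q) d"
    using pw_restr assms unfolding walk_def by metis
  have "vs \<noteq> []"
    using assms(2) by auto
  then have "\<phi> p \<in> S" "\<phi> q \<in> S"
    using assms by (metis hd_in_set last_in_set subsetD)+
  show ?thesis
  proof (cases "p = q")
    case True
    then show ?thesis
      using walk nonneg_cycles_inside walk_le_refl unfolding nonneg_cycles_def by blast
  next
    case False
    then show ?thesis
      using edge_inside[OF \<open>\<phi> p \<in> S\<close> \<open>\<phi> q \<in> S\<close> False walk] walk_le_edge walk_le_mono by blast
  qed
qed

lemma walk_le_crossing:
  assumes "pw E vs = Some d" "hd vs = \<phi> p" "last vs = \<phi> q" "\<not> set vs \<subseteq> S"
    and "\<And>i. 0 < i \<Longrightarrow> i < length vs - 1 \<Longrightarrow> vs ! i \<notin> range \<phi>"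
  shows "walk_le E' p q d"
proof -
  have "length vs \<le> 2" "vs \<noteq> []"
    using crossing_walk_length assms by auto
  then consider "vs = [\<phi> p]" | "vs = [\<phi> p, \<phi> q]"
    using assms(2,3) by (auto simp: le_Suc_eq length_Suc_conv numeral_2_eq_2)
  then show ?thesis
  proof cases
    case 1
    with assms(1,3) inj_phi show ?thesis
      by (auto simp: inj_eq walk_le_refl)
  next
    case 2
    then have "E (\<phi> p) (\<phi> q) = Some d"
      using assms(1) by (cases "E (\<phi> p) (\<phi> q)") auto
    moreover have "\<not> (\<phi> p \<in> S \<and> \<phi> q \<in> S)"
      using 2 assms(4) by auto
    ultimately have "E' p q = Some d"
      using edge_outside by simp
    then show ?thesis
      by (rule walk_le_edge)
  qed
qed

text \<open>A walk between vertices of the image is cut at its interior vertices in the image; each piece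
  either runs inside \<open>S\<close> or is a single edge kept in \<open>E'\<close>.\<close>

lemma walk_le_project:
  "pw E vs = Some d \<Longrightarrow> hd vs = \<phi> p \<Longrightarrow> last vs = \<phi> q \<Longrightarrow> walk_le E' p q d"
proof (induction "length vs" arbitrary: vs d p q rule: less_induct)
  case less
  consider (inside) "set vs \<subseteq> S"
    | (through) i where "0 < i" "i < length vs - 1" "vs ! i \<in> range \<phi>"
    | (crossing) "\<not> set vs \<subseteq> S" "\<And>i. 0 < i \<Longrightarrow> i < length vs - 1 \<Longrightarrow> vs ! i \<notin> range \<phi>"
    by blast
  then show ?case
  proof cases
    case (through i)
    then obtain m where m: "vs ! i = \<phi> m" by blast
    have "vs = take i vs @ \<phi> m # drop (Suc i) vs"
      using through m id_take_nth_drop[of i vs] by simp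
    then obtain a b where a: "pw E (take i vs @ [\<phi> m]) = Some a"
      and b: "pw E (\<phi> m # drop (Suc i) vs) = Some b" and d: "d = wadd a b"
      using pw_split[of E "take i vs" "\<phi> m" "drop (Suc i) vs"] less.prems(1) by metis
    have "vs \<noteq> []"
      using less.prems(1) by auto
    then have "length (take i vs @ [\<phi> m]) < length vs" "hd (take i vs @ [\<phi> m]) = \<phi> p"
      using through less.prems(2) by (auto simp: hd_append)
    then have "walk_le E' p m a"
      using less.hyps[OF _ a, of p m] by simp
    moreover have "length (\<phi> m # drop (Suc i) vs) < length vs" "last (\<phi> m # drop (Suc i) vs) = \<phi> q"
      using through less.prems(3) by auto
    then have "walk_le E' m q b"
      using less.hyps[OF _ b, of m q] by simp
    ultimately show ?thesis
      unfolding d by (rule walk_le_trans)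
  qed (use less.prems walk_le_inside walk_le_crossing in blast)+
qed

lemma walk_le_iff: "walk_le E' p q d \<longleftrightarrow> walk_le E (\<phi> p) (\<phi> q) d"
proof
  assume "walk_le E' p q d"
  then obtain d' where "walk E' p q d'" "wle d' d"
    unfolding walk_le_def by blast
  then show "walk_le E (\<phi> p) (\<phi> q) d"
    using walk_lift[of E' E \<phi>, OF edge_realised] walk_le_mono by blast
next
  assume "walk_le E (\<phi> p) (\<phi> q) d"
  then obtain vs d' where "hd vs = \<phi> p" "last vs = \<phi> q" "pw E vs = Some d'" "wle d' d"
    unfolding walk_le_def walk_def by blast
  then show "walk_le E' p q d"
    using walk_le_project walk_le_mono by blast
qed

lemma least_walk_weight_iff:
  "least_weight {d. walk E' p q d} m \<longleftrightarrow> least_weight {d. walk E (\<phi> p) (\<phi> q) d} m"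
proof -
  have "\<exists>d'\<in>{d. walk E (\<phi> p) (\<phi> q) d}. wle d' d" if "d \<in> {d. walk E' p q d}" for d
    using that walk_le_iff[of p q d] wle_refl unfolding walk_le_def by blast
  moreover have "\<exists>d'\<in>{d. walk E' p q d}. wle d' d" if "d \<in> {d. walk E (\<phi> p) (\<phi> q) d}" for d
    using that walk_le_iff[of p q d] wle_refl unfolding walk_le_def by blast
  ultimately show ?thesis
    using least_weight_coinitial by blast
qed

lemma ex_walk_iff: "(\<exists>d. walk E' p q d) \<longleftrightarrow> (\<exists>d. walk E (\<phi> p) (\<phi> q) d)"
  using walk_le_iff wle_refl unfolding walk_le_def by blast

lemma nonneg_cycles_contracted:
  assumes "nonneg_cycles E" shows "nonneg_cycles E'"
  unfolding nonneg_cycles_def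
proof (intro allI impI)
  fix u d
  assume "walk E' u u d"
  then obtain d' where "walk E (\<phi> u) (\<phi> u) d'" "wle d' d"
    using walk_le_iff[of u u d] wle_refl unfolding walk_le_def by blast
  then show "wle (Le, 0) d"
    using assms wle_trans unfolding nonneg_cycles_def by blast
qed

end

lemma tgraph_eqI: "ncols G = ncols H \<Longrightarrow> edg G = edg H \<Longrightarrow> G = H"
  by (simp add: ncols_def edg_def prod_eq_iff)

lemma tgraph_ncols: "tgraph G \<Longrightarrow> 2 \<le> ncols G"
  by (simp add: tgraph_def)

lemma tgraph_edge: "tgraph G \<Longrightarrow> edg G u v \<noteq> None \<Longrightarrow> fst u < ncols G \<and> fst v < ncols G"
  unfolding tgraph_def by blast

lemma tgraph_edge_None: "tgraph G \<Longrightarrow> \<not> (fst u < ncols G \<and> fst v < ncols G) \<Longrightarrow> edg G u v = None"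
  using tgraph_edge by blast

lemma edg_canon:
  "edg (canon G) u w = (if u \<noteq> w \<and> (\<exists>d. walk (edg G) u w d) then Some (min_path_weight G u w) else None)"
proof -
  have "(u \<noteq> w \<and> (\<exists>d. is_path G u w d)) \<longleftrightarrow> (u \<noteq> w \<and> (\<exists>d. walk (edg G) u w d))"
    using is_path_iff_walk by blast
  then show ?thesis
    by (simp add: canon_def edg_def[of "(_, _)"])
qed

lemma min_path_weight_eq:
  assumes "u \<noteq> w" and "least_weight {d. walk (edg G) u w d} m"
  shows "min_path_weight G u w = m"
  unfolding min_path_weight_def
proof (rule the_equality)
  show "is_path G u w m \<and> (\<forall>d'. is_path G u w d' \<longrightarrow> wle m d')"
    using assms unfolding least_weight_def is_path_iff_walk[OF assms(1)] by blast
next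
  fix d assume "is_path G u w d \<and> (\<forall>d'. is_path G u w d' \<longrightarrow> wle d d')"
  then have "least_weight {d. walk (edg G) u w d} d"
    unfolding least_weight_def is_path_iff_walk[OF assms(1)] by blast
  then show "d = m"
    using assms(2) least_weight_unique by blast
qed

lemma tgraph_least_walk_weight:
  fixes G :: "('c::finite) tgraph"
  assumes "tgraph G" "no_neg_cycle G" "walk (edg G) u w d"
  shows "\<exists>m. least_weight {d. walk (edg G) u w d} m"
proof (rule least_walk_weight_exists)
  show "finite ({..<ncols G} \<times> (UNIV :: 'c set))"
    by simp
  show "u \<in> {..<ncols G} \<times> UNIV \<and> v \<in> {..<ncols G} \<times> UNIV" if "edg G u v \<noteq> None" for u v
    using tgraph_edge[OF assms(1) that] by (simp add: mem_Times_iff)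
qed (use assms no_neg_cycle_iff in blast)+

lemma edg_canon_SomeD:
  fixes G :: "('c::finite) tgraph"
  assumes "tgraph G" "no_neg_cycle G" "edg (canon G) u w = Some e"
  shows "least_weight {d. walk (edg G) u w d} e"
proof -
  obtain d where "u \<noteq> w" "walk (edg G) u w d" "e = min_path_weight G u w"
    using assms(3) by (auto simp: edg_canon split: if_splits)
  then show ?thesis
    using tgraph_least_walk_weight[OF assms(1,2)] min_path_weight_eq by metis
qed

lemma edg_canon_le:
  fixes G :: "('c::finite) tgraph"
  assumes "tgraph G" "no_neg_cycle G" "u \<noteq> w" "walk (edg G) u w d"
  shows "\<exists>e. edg (canon G) u w = Some e \<and> wle e d"
proof -
  obtain m where m: "least_weight {d. walk (edg G) u w d} m"
    using tgraph_least_walk_weight[OF assms(1,2,4)] by blast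
  have "\<exists>d. walk (edg G) u w d"
    using assms(4) by blast
  then have "edg (canon G) u w = Some m"
    using assms(3) m min_path_weight_eq unfolding edg_canon by simp
  moreover have "wle m d"
    using m assms(4) unfolding least_weight_def by blast
  ultimately show ?thesis by blast
qed

lemma edg_canon_contraction:
  fixes H H' :: "('c::finite) tgraph"
  assumes "contraction (edg H) (edg H') S \<phi>" "tgraph H" "tgraph H'" "no_neg_cycle H \<or> no_neg_cycle H'"
  shows "edg (canon H) (\<phi> p) (\<phi> q) = edg (canon H') p q"
proof -
  interpret contraction "edg H" "edg H'" S \<phi> by fact
  have "\<phi> p = \<phi> q \<longleftrightarrow> p = q"
    using inj_phi by (simp add: inj_eq)
  show ?thesis
  proof (cases "p \<noteq> q \<and> (\<exists>d. walk (edg H') p q d)")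
    case True
    then obtain d d' where d: "walk (edg H') p q d" and d': "walk (edg H) (\<phi> p) (\<phi> q) d'"
      using ex_walk_iff by blast
    obtain m where m: "least_weight {d. walk (edg H') p q d} m"
      using assms(2-4) tgraph_least_walk_weight d d' least_walk_weight_iff by metis
    moreover have "least_weight {d. walk (edg H) (\<phi> p) (\<phi> q) d} m"
      using m least_walk_weight_iff by blast
    ultimately have "min_path_weight H' p q = m" "min_path_weight H (\<phi> p) (\<phi> q) = m"
      using True \<open>\<phi> p = \<phi> q \<longleftrightarrow> p = q\<close> min_path_weight_eq by blast+
    moreover have "\<exists>d. walk (edg H) (\<phi> p) (\<phi> q) d"
      using d' by blast
    ultimately show ?thesis
      using True \<open>\<phi> p = \<phi> q \<longleftrightarrow> p = q\<close> unfolding edg_canon by simp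
  next
    case False
    then have "\<not> (\<phi> p \<noteq> \<phi> q \<and> (\<exists>d. walk (edg H) (\<phi> p) (\<phi> q) d))"
      using ex_walk_iff[of p q] \<open>\<phi> p = \<phi> q \<longleftrightarrow> p = q\<close> by blast
    with False show ?thesis
      unfolding edg_canon by simp
  qed
qed

lemma short_eq_contraction:
  fixes H H' :: "('c::finite) tgraph"
  assumes "contraction (edg H) (edg H') S \<phi>" "tgraph H" "tgraph H'" "no_neg_cycle H \<or> no_neg_cycle H'"
    and first: "\<And>x. \<phi> (0, x) = (0, x)" and last: "\<And>x. \<phi> (ncols H' - 1, x) = (ncols H - 1, x)"
  shows "short H = short H'"
proof -
  have canon: "edg (canon H) (\<phi> p) (\<phi> q) = edg (canon H') p q" for p q
    using edg_canon_contraction[OF assms(1-4)] .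
  have ends: "(case u of (j, x) \<Rightarrow> (if j = 0 then 0 else ncols H - 1, x)) =
      \<phi> (case u of (j, x) \<Rightarrow> (if j = 0 then 0 else ncols H' - 1, x))" for u :: "'c vertex"
    by (cases u) (simp add: first last[simplified])
  show ?thesis
    unfolding short_def Let_def by (simp only: ends canon)
qed

lemma ncols_comp [simp]: "ncols (A \<odot> B) = ncols A + ncols B"
  by (simp add: comp_def Let_def ncols_def)

lemma edg_comp: "edg (A \<odot> B) u v =
    (if fst u < ncols A \<and> fst v < ncols A then edg A u v
     else if ncols A \<le> fst u \<and> ncols A \<le> fst v
       then edg B (fst u - ncols A, snd u) (fst v - ncols A, snd v)
     else if snd u = snd v \<and> (fst u = ncols A - 1 \<and> fst v = ncols A \<or> fst u = ncols A \<and> fst v = ncols A - 1)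
       then Some (Le, 0) else None)"
  by (simp add: comp_def Let_def ncols_def edg_def)

lemma ncols_short [simp]: "ncols (short G) = 2"
  by (simp add: short_def ncols_def)

lemma edg_short: "edg (short G) u w =
    (if fst u \<le> 1 \<and> fst w \<le> 1
     then edg (canon G) (if fst u = 0 then 0 else ncols G - 1, snd u) (if fst w = 0 then 0 else ncols G - 1, snd w)
     else None)"
  by (cases u; cases w) (simp add: short_def edg_def Let_def)

lemma tgraph_comp:
  assumes "tgraph A" "tgraph B" shows "tgraph (A \<odot> B)"
proof -
  have "fst u < ncols (A \<odot> B) \<and> fst v < ncols (A \<odot> B)" if "edg (A \<odot> B) u v \<noteq> None" for u v
    using that tgraph_ncols[OF assms(2)] tgraph_edge[OF assms(1), of u v]
      tgraph_edge[OF assms(2), of "(fst u - ncols A, snd u)" "(fst v - ncols A, snd v)"]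
    by (auto simp: edg_comp split: if_splits)
  then show ?thesis
    using tgraph_ncols[OF assms(1)] unfolding tgraph_def by auto
qed

lemma tgraph_short: "tgraph (short G)"
  unfolding tgraph_def by (simp add: edg_short)

lemma edg_comp_left: "fst u < ncols A \<Longrightarrow> fst v < ncols A \<Longrightarrow> edg (A \<odot> B) u v = edg A u v"
  by (simp add: edg_comp)

lemma edg_comp_right: "ncols A \<le> fst u \<Longrightarrow> ncols A \<le> fst v \<Longrightarrow>
    edg (A \<odot> B) u v = edg B (fst u - ncols A, snd u) (fst v - ncols A, snd v)"
  by (simp add: edg_comp)

lemma edg_comp_left_right: "fst u < ncols A \<Longrightarrow> ncols A \<le> fst v \<Longrightarrow>
    edg (A \<odot> B) u v = (if snd u = snd v \<and> fst u = ncols A - 1 \<and> fst v = ncols A then Some (Le, 0) else None)"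
  by (simp add: edg_comp)

lemma edg_comp_right_left: "ncols A \<le> fst u \<Longrightarrow> fst v < ncols A \<Longrightarrow>
    edg (A \<odot> B) u v = (if snd u = snd v \<and> fst u = ncols A \<and> fst v = ncols A - 1 then Some (Le, 0) else None)"
  by (simp add: edg_comp)

lemma comp_assoc:
  assumes "1 \<le> ncols A" "1 \<le> ncols B"
  shows "(A \<odot> B) \<odot> C = A \<odot> (B \<odot> C)"
proof (intro tgraph_eqI ext)
  fix u v :: "'a vertex"
  let ?a = "ncols A" and ?ab = "ncols A + ncols B"
  have "fst u < ?a \<or> ?a \<le> fst u \<and> fst u < ?ab \<or> ?ab \<le> fst u"
    "fst v < ?a \<or> ?a \<le> fst v \<and> fst v < ?ab \<or> ?ab \<le> fst v" by auto
  then show "edg (A \<odot> B \<odot> C) u v = edg (A \<odot> (B \<odot> C)) u v"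
    using assms
    by (elim disjE conjE)
      (simp_all add: edg_comp_left edg_comp_right edg_comp_left_right edg_comp_right_left diff_diff_left;
       arith)+
qed simp

subsection \<open>Contracting the left factor\<close>

text \<open>Columns \<open>0\<close> and \<open>1\<close> of \<open>short A \<odot> B\<close> are columns \<open>0\<close> and \<open>k - 1\<close> of \<open>A \<odot> B\<close>, where
  \<open>k = ncols A\<close>; the columns of \<open>B\<close> move from \<open>j \<ge> 2\<close> to \<open>j + k - 2\<close>.\<close>

definition left_embed :: "nat \<Rightarrow> 'c vertex \<Rightarrow> 'c vertex" where
  "left_embed k u = (if fst u = 0 then 0 else fst u + k - 2, snd u)"

lemma left_embed_simps [simp]:
  "fst (left_embed k u) = (if fst u = 0 then 0 else fst u + k - 2)" "snd (left_embed k u) = snd u"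
  by (simp_all add: left_embed_def)

lemma inj_left_embed: "2 \<le> k \<Longrightarrow> inj (left_embed k)"
  unfolding inj_def by (auto simp: prod_eq_iff split: if_splits)

lemma range_left_embed: "2 \<le> k \<Longrightarrow> fst u = 0 \<or> k - 1 \<le> fst u \<Longrightarrow> u \<in> range (left_embed k)"
  by (rule range_eqI[of _ _ "(if fst u = 0 then 0 else fst u + 2 - k, snd u)"]) (auto simp: prod_eq_iff)

lemma restr_comp_left: "tgraph A \<Longrightarrow> restr (edg (A \<odot> B)) {u. fst u < ncols A} = edg A"
  by (intro ext) (auto simp: restr_def edg_comp tgraph_edge_None)

lemma left_embed_low: "fst u \<le> 1 \<Longrightarrow> left_embed k u = (if fst u = 0 then 0 else k - 1, snd u)"
  by (auto simp: left_embed_def)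

lemma fst_left_embed_less: "2 \<le> k \<Longrightarrow> fst (left_embed k u) < k \<longleftrightarrow> fst u \<le> 1"
  by auto

lemma edg_comp_short_left_inside:
  "fst p \<le> 1 \<Longrightarrow> fst q \<le> 1 \<Longrightarrow>
     edg (short A \<odot> B) p q = edg (canon A) (left_embed (ncols A) p) (left_embed (ncols A) q)"
  by (simp add: edg_comp edg_short left_embed_low)

lemma edg_comp_short_left_outside:
  assumes "2 \<le> ncols A" "\<not> (fst p \<le> 1 \<and> fst q \<le> 1)"
  shows "edg (short A \<odot> B) p q = edg (A \<odot> B) (left_embed (ncols A) p) (left_embed (ncols A) q)"
proof -
  consider "2 \<le> fst p" "2 \<le> fst q" | "fst p \<le> 1" "2 \<le> fst q" | "2 \<le> fst p" "fst q \<le> 1"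
    using assms(2) by linarith
  then show ?thesis
  proof cases
    case 1
    with assms(1) show ?thesis by (simp add: edg_comp_right)
  next
    case 2
    moreover have "fst (left_embed (ncols A) p) < ncols A" "ncols A \<le> fst (left_embed (ncols A) q)"
      using 2 assms(1) by auto
    ultimately show ?thesis
      using assms(1) by (simp add: edg_comp_left_right del: left_embed_simps) auto
  next
    case 3
    moreover have "ncols A \<le> fst (left_embed (ncols A) p)" "fst (left_embed (ncols A) q) < ncols A"
      using 3 assms(1) by auto
    ultimately show ?thesis
      using assms(1) by (simp add: edg_comp_right_left del: left_embed_simps) auto
  qed
qed

lemma walk_le_comp_left:
  assumes "tgraph A" "walk (edg A) u w d"
  shows "walk_le (edg (A \<odot> B)) u w d"
proof -
  have "walk_le (edg (A \<odot> B)) u v e" if "edg A u v = Some e" for u v e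
    using that tgraph_edge[OF assms(1), of u v] by (simp add: edg_comp_left walk_le_edge)
  then show ?thesis
    using walk_lift[of "edg A" "edg (A \<odot> B)" id] assms(2) by simp
qed

lemma contraction_left:
  fixes A B :: "('c::finite) tgraph"
  assumes A: "tgraph A" "no_neg_cycle A"
  shows "contraction (edg (A \<odot> B)) (edg (short A \<odot> B)) {u. fst u < ncols A} (left_embed (ncols A))"
proof
  let ?\<phi> = "left_embed (ncols A)" and ?S = "{u. fst u < ncols A}"
  have k: "2 \<le> ncols A"
    using tgraph_ncols[OF A(1)] .
  have inside: "fst p \<le> 1 \<and> fst q \<le> 1" if "?\<phi> p \<in> ?S \<and> ?\<phi> q \<in> ?S" for p q
    using that by (simp add: fst_left_embed_less[OF k] del: left_embed_simps)
  show "inj ?\<phi>"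
    using inj_left_embed[OF k] .
  show "u \<in> range ?\<phi> \<and> v \<in> range ?\<phi>" if "edg (A \<odot> B) u v \<noteq> None" "\<not> (u \<in> ?S \<and> v \<in> ?S)" for u v
    using that k by (intro conjI range_left_embed) (auto simp: edg_comp split: if_splits)
  show outside: "edg (short A \<odot> B) p q = edg (A \<odot> B) (?\<phi> p) (?\<phi> q)"
    if "\<not> (?\<phi> p \<in> ?S \<and> ?\<phi> q \<in> ?S)" for p q
    using that by (intro edg_comp_short_left_outside[OF k]) (simp add: fst_left_embed_less[OF k] del: left_embed_simps)
  show "\<exists>e. edg (short A \<odot> B) p q = Some e \<and> wle e d"
    if "?\<phi> p \<in> ?S" "?\<phi> q \<in> ?S" "p \<noteq> q" "walk (restr (edg (A \<odot> B)) ?S) (?\<phi> p) (?\<phi> q) d" for p q d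
  proof -
    have "?\<phi> p \<noteq> ?\<phi> q"
      using that(3) inj_left_embed[OF k] by (metis injD)
    moreover have "walk (edg A) (?\<phi> p) (?\<phi> q) d"
      using that(4) restr_comp_left[OF A(1)] by simp
    ultimately obtain e where "edg (canon A) (?\<phi> p) (?\<phi> q) = Some e" "wle e d"
      using edg_canon_le[OF A] by blast
    moreover have "fst p \<le> 1" "fst q \<le> 1"
      using inside that(1,2) by blast+
    ultimately show ?thesis
      by (simp add: edg_comp_short_left_inside)
  qed
  show "walk_le (edg (A \<odot> B)) (?\<phi> p) (?\<phi> q) e" if e: "edg (short A \<odot> B) p q = Some e" for p q e
  proof (cases "?\<phi> p \<in> ?S \<and> ?\<phi> q \<in> ?S")
    case True
    then have "walk (edg A) (?\<phi> p) (?\<phi> q) e"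
      using e edg_canon_SomeD[OF A] inside[OF True] unfolding least_weight_def
      by (simp add: edg_comp_short_left_inside)
    then show ?thesis
      using walk_le_comp_left[OF A(1)] by blast
  next
    case False
    then show ?thesis
      using e outside walk_le_edge by metis
  qed
  show "nonneg_cycles (restr (edg (A \<odot> B)) ?S)"
    using A no_neg_cycle_iff restr_comp_left by metis
qed

lemma short_comp_short_left:
  fixes A B :: "('c::finite) tgraph"
  assumes "tgraph A" "tgraph B" "no_neg_cycle A" "no_neg_cycle (A \<odot> B) \<or> no_neg_cycle (short A \<odot> B)"
  shows "short (A \<odot> B) = short (short A \<odot> B)"
proof (rule short_eq_contraction[OF contraction_left[OF assms(1,3)]])
  show "tgraph (A \<odot> B)" "tgraph (short A \<odot> B)"
    using assms(1,2) tgraph_short by (blast intro: tgraph_comp)+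
  show "left_embed (ncols A) (ncols (short A \<odot> B) - 1, x) = (ncols (A \<odot> B) - 1, x)" for x
    using tgraph_ncols[OF assms(1)] tgraph_ncols[OF assms(2)] by (simp add: left_embed_def)
qed (use assms(4) in \<open>simp_all add: left_embed_def\<close>)

lemma no_neg_cycle_comp_short_left:
  fixes A B :: "('c::finite) tgraph"
  assumes "tgraph A" "no_neg_cycle A" "no_neg_cycle (A \<odot> B)"
  shows "no_neg_cycle (short A \<odot> B)"
  using contraction.nonneg_cycles_contracted[OF contraction_left[OF assms(1,2)]] assms(3)
  unfolding no_neg_cycle_iff .

subsection \<open>Mirror images\<close>

text \<open>Vertices outside the columns are fixed, so that \<open>mirror_vertex k\<close> is an involution.\<close>

definition mirror_vertex :: "nat \<Rightarrow> 'c vertex \<Rightarrow> 'c vertex" where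
  "mirror_vertex k u = (if fst u < k then (k - 1 - fst u, snd u) else u)"

definition mirror :: "'c tgraph \<Rightarrow> 'c tgraph" where
  "mirror G = (ncols G, \<lambda>u v. edg G (mirror_vertex (ncols G) u) (mirror_vertex (ncols G) v))"

lemma mirror_vertex_mirror_vertex [simp]: "mirror_vertex k (mirror_vertex k u) = u"
  by (auto simp: mirror_vertex_def)

lemma ncols_mirror [simp]: "ncols (mirror G) = ncols G"
  by (simp add: mirror_def ncols_def)

lemma edg_mirror: "edg (mirror G) u v = edg G (mirror_vertex (ncols G) u) (mirror_vertex (ncols G) v)"
  by (simp add: mirror_def edg_def ncols_def)

lemma mirror_mirror: "mirror (mirror G) = G"
  by (intro tgraph_eqI ext) (simp_all add: edg_mirror)

lemma fst_mirror_vertex_less [simp]: "fst (mirror_vertex k u) < k \<longleftrightarrow> fst u < k"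
  by (auto simp: mirror_vertex_def)

lemma tgraph_mirror: "tgraph G \<Longrightarrow> tgraph (mirror G)"
  unfolding tgraph_def edg_mirror by (metis fst_mirror_vertex_less ncols_mirror)

lemma pw_relabel: "pw (\<lambda>u v. E (f u) (f v)) vs = pw E (map f vs)"
  by (induction vs rule: induct_list012) (simp_all split: option.splits)

lemma is_path_mirror:
  "is_path (mirror G) u w d \<longleftrightarrow> is_path G (mirror_vertex (ncols G) u) (mirror_vertex (ncols G) w) d"
proof -
  let ?m = "mirror_vertex (ncols G)"
  have pw: "pw (edg (mirror G)) vs = pw (edg G) (map ?m vs)" for vs
    using pw_relabel[of "edg G" ?m] by (simp add: edg_mirror[abs_def])
  have "is_path (mirror G) u w d" if path: "is_path G (?m u) (?m w) d"
  proof -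
    obtain vs where vs: "2 \<le> length vs" "hd vs = ?m u" "last vs = ?m w" "pw (edg G) vs = Some d"
      using path unfolding is_path_def by blast
    moreover have "vs \<noteq> []"
      using vs(1) by auto
    moreover have "map ?m (map ?m vs) = vs"
      by (induction vs) simp_all
    ultimately show ?thesis
      unfolding is_path_def pw
      by (intro exI[of _ "map ?m vs"]) (auto simp: hd_map last_map simp del: map_map)
  qed
  moreover have "is_path G (?m u) (?m w) d" if path: "is_path (mirror G) u w d"
  proof -
    obtain vs where vs: "2 \<le> length vs" "hd vs = u" "last vs = w" "pw (edg G) (map ?m vs) = Some d"
      using path unfolding is_path_def pw by blast
    moreover have "vs \<noteq> []"
      using vs(1) by auto
    ultimately show ?thesis
      unfolding is_path_def by (intro exI[of _ "map ?m vs"]) (auto simp: hd_map last_map)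
  qed
  ultimately show ?thesis by blast
qed

lemma no_neg_cycle_mirror: "no_neg_cycle (mirror G) \<longleftrightarrow> no_neg_cycle G"
  unfolding no_neg_cycle_def is_path_mirror by (metis mirror_vertex_mirror_vertex)

lemma edg_canon_mirror:
  "edg (canon (mirror G)) u w = edg (canon G) (mirror_vertex (ncols G) u) (mirror_vertex (ncols G) w)"
proof -
  have "mirror_vertex (ncols G) u = mirror_vertex (ncols G) w \<longleftrightarrow> u = w"
    by (metis mirror_vertex_mirror_vertex)
  moreover have "min_path_weight (mirror G) u w =
      min_path_weight G (mirror_vertex (ncols G) u) (mirror_vertex (ncols G) w)"
    unfolding min_path_weight_def is_path_mirror ..
  ultimately show ?thesis
    by (simp add: canon_def edg_def[of "(_, _)"] is_path_mirror)
qed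

lemma short_mirror:
  assumes "tgraph G" shows "short (mirror G) = mirror (short G)"
proof (intro tgraph_eqI ext)
  fix u w :: "'a vertex"
  have "mirror_vertex (ncols G) (if fst v = 0 then 0 else ncols G - 1, snd v) =
      (if fst (mirror_vertex 2 v) = 0 then 0 else ncols G - 1, snd (mirror_vertex 2 v))" if "fst v \<le> 1" for v :: "'a vertex"
    using that tgraph_ncols[OF assms] by (auto simp: mirror_vertex_def)
  then show "edg (short (mirror G)) u w = edg (mirror (short G)) u w"
    by (auto simp: edg_short edg_mirror edg_canon_mirror mirror_vertex_def)
qed simp

lemma mirror_vertex_less: "fst u < k \<Longrightarrow> mirror_vertex k u = (k - 1 - fst u, snd u)"
  by (simp add: mirror_vertex_def)

lemma mirror_vertex_ge: "k \<le> fst u \<Longrightarrow> mirror_vertex k u = u"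
  by (simp add: mirror_vertex_def)

lemma mirror_comp:
  assumes "tgraph A" "tgraph B" shows "mirror (A \<odot> B) = mirror B \<odot> mirror A"
proof (intro tgraph_eqI ext)
  fix u v :: "'a vertex"
  let ?a = "ncols A" and ?b = "ncols B"
  have k: "2 \<le> ?a" "2 \<le> ?b"
    using assms by (simp_all add: tgraph_ncols)
  have None: "edg (A \<odot> B) u' v' = None" if "\<not> (fst u' < ?a + ?b \<and> fst v' < ?a + ?b)" for u' v'
    using that tgraph_edge_None[OF tgraph_comp[OF assms]] by simp
  have "fst u < ?b \<or> ?b \<le> fst u \<and> fst u < ?a + ?b \<or> ?a + ?b \<le> fst u"
    "fst v < ?b \<or> ?b \<le> fst v \<and> fst v < ?a + ?b \<or> ?a + ?b \<le> fst v" by auto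
  then show "edg (mirror (A \<odot> B)) u v = edg (mirror B \<odot> mirror A) u v"
    unfolding edg_mirror ncols_comp ncols_mirror using k
    by (elim disjE conjE;
        simp add: edg_comp_left edg_comp_right edg_comp_left_right edg_comp_right_left
          mirror_vertex_less mirror_vertex_ge None edg_mirror tgraph_edge_None[OF assms(1)]
          tgraph_edge_None[OF assms(2)])
      (auto intro!: tgraph_edge_None[OF assms(1), symmetric])
qed simp

lemma short_comp_short_right:
  fixes A B :: "('c::finite) tgraph"
  assumes A: "tgraph A" and B: "tgraph B" "no_neg_cycle B"
    and nn: "no_neg_cycle (A \<odot> B) \<or> no_neg_cycle (A \<odot> short B)"
  shows "short (A \<odot> B) = short (A \<odot> short B)"
proof -
  have mirror_short_comp: "mirror (short (A \<odot> C)) = short (mirror C \<odot> mirror A)" if "tgraph C" for C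
    using short_mirror[OF tgraph_comp[OF A that]] mirror_comp[OF A that] by simp
  have "no_neg_cycle (mirror B \<odot> mirror A) \<or> no_neg_cycle (short (mirror B) \<odot> mirror A)"
    using nn no_neg_cycle_mirror mirror_comp[OF A] B(1) tgraph_short short_mirror[OF B(1)] by metis
  then have "short (mirror B \<odot> mirror A) = short (short (mirror B) \<odot> mirror A)"
    using short_comp_short_left tgraph_mirror A B no_neg_cycle_mirror by metis
  then have "mirror (short (A \<odot> B)) = mirror (short (A \<odot> short B))"
    using mirror_short_comp[OF B(1)] mirror_short_comp[OF tgraph_short] short_mirror[OF B(1)] by simp
  then show ?thesis
    by (metis mirror_mirror)
qed

theorem mainTheorem12:
  shows "(\<forall>G1 G2 :: ('c::finite) tgraph.
            tgraph G1 \<and> tgraph G2 \<and> no_neg_cycle G1 \<and> no_neg_cycle G2 \<and> no_neg_cycle (G1 \<odot> G2)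
            \<longrightarrow> G1 \<cdot> G2 = short G1 \<cdot> short G2)
       \<and> (\<forall>G1 G2 G3 :: ('c::finite) tgraph.
            tgraph G1 \<and> tgraph G2 \<and> tgraph G3 \<and>
            no_neg_cycle G1 \<and> no_neg_cycle G2 \<and> no_neg_cycle G3 \<and>
            no_neg_cycle (G1 \<odot> G2) \<and> no_neg_cycle (G2 \<odot> G3) \<and>
            no_neg_cycle ((G1 \<cdot> G2) \<odot> G3) \<and> no_neg_cycle (G1 \<odot> (G2 \<cdot> G3))
            \<longrightarrow> (G1 \<cdot> G2) \<cdot> G3 = G1 \<cdot> (G2 \<cdot> G3))"
proof (intro conjI allI impI; elim conjE)
  fix G1 G2 :: "'c tgraph"
  assume G: "tgraph G1" "tgraph G2" "no_neg_cycle G1" "no_neg_cycle G2" "no_neg_cycle (G1 \<odot> G2)"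
  have "short (G1 \<odot> G2) = short (short G1 \<odot> G2)"
    using G short_comp_short_left by blast
  also have "\<dots> = short (short G1 \<odot> short G2)"
    using G no_neg_cycle_comp_short_left tgraph_short short_comp_short_right by blast
  finally show "G1 \<cdot> G2 = short G1 \<cdot> short G2"
    unfolding dot_def .
next
  fix G1 G2 G3 :: "'c tgraph"
  assume "tgraph G1" "tgraph G2" "tgraph G3" "no_neg_cycle (G1 \<odot> G2)" "no_neg_cycle (G2 \<odot> G3)"
    "no_neg_cycle ((G1 \<cdot> G2) \<odot> G3)" "no_neg_cycle (G1 \<odot> (G2 \<cdot> G3))"
  then have "short (short (G1 \<odot> G2) \<odot> G3) = short ((G1 \<odot> G2) \<odot> G3)"
    and "short (G1 \<odot> short (G2 \<odot> G3)) = short (G1 \<odot> (G2 \<odot> G3))"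
    unfolding dot_def using short_comp_short_left short_comp_short_right tgraph_comp by metis+
  moreover have "(G1 \<odot> G2) \<odot> G3 = G1 \<odot> (G2 \<odot> G3)"
    using tgraph_ncols[OF \<open>tgraph G1\<close>] tgraph_ncols[OF \<open>tgraph G2\<close>] by (simp add: comp_assoc)
  ultimately show "(G1 \<cdot> G2) \<cdot> G3 = G1 \<cdot> (G2 \<cdot> G3)"
    unfolding dot_def by simp
qed

end
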